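(* Let $P$ be a domain and $D\ge 2$ an integer. Let $C\subseteq P$ be a comb with root $p$, where $p$ is a boundary pixel of $P$, and suppose that $\mathrm{vdist}(q)=1+|x_q-x_p|+|y_q-y_p|$ for every $q\in C$, where $(x_q,y_q)$ denotes the lower-left corner of pixel $q$. Suppose each pixel of $C\setminus\{p\}$ carries exactly one unit of snow, $p$ carries none, and the snowblower stands on $p$. Let $\Delta=\frac1D\sum_{q\in C\setminus\{p\}}\mathrm{vdist}(q)$. Then in the default model there is a sequence of moves obeying the capacity constraint, in which the snowblower only visits pixels of $C$ and snow is only thrown onto pixels of $C$ or out of $P$, which ends with the snowblower on $p$ and no pixel of $C$ carrying snow, and whose number of moves is at most $4|C\setminus\{p\}|+4\Delta$ if $D\ge4$ and at most $4|C\setminus\{p\}|+2\Delta$ if $D\in\{2,3\}$.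
   Context: A pixel is a closed unit square $[i,i+1]\times[j,j+1]$, $i,j\in\mathbb{Z}$, identified with its lower-left corner $(i,j)$; two pixels are adjacent if they share a side. The domain $P$ is a finite set of pixels whose dual graph $G_P$ (vertex per pixel, edges between adjacent pixels) is connected. A boundary side is a side of a pixel of $P$ not shared with another pixel of $P$; a boundary pixel is a pixel of $P$ with a boundary side. For $q\in P$, $\mathrm{vdist}(q)=1+\min_{b}\mathrm{dist}_{G_P}(q,b)$, the minimum over boundary pixels $b$ of $P$. A (horizontal) comb is a set of pixels of the form $C=\{(x,y): y_0\le y\le y_0+H-1,\ a_y\le x\le c\}$ (a leftward comb) or $C=\{(x,y): y_0\le y\le y_0+H-1,\ c\le x\le a_y\}$ (a rightward comb), for integers $y_0$, $H\ge1$, $c$ and $a_y$ ($a_y\le c$, resp. $a_y\ge c$); its handle is the column $\{(c,y): y_0\le y\le y_0+H-1\}$, its teeth are the rows, and its root is either $(c,y_0)$ or $(c,y_0+H-1)$. A move (default model): the snowblower goes from its pixel $v$ to an adjacent pixel $u\in P$, and upon entering $u$ all snow on $u$ is thrown onto any chosen one of the four pixels adjacent to $u$ (including $v$); if that pixel is not in $P$ the snow disappears, otherwise it is added to the snow there. Capacity constraint: at all times every pixel of $P$ carries at most $D$ units of snow. *)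

theory Defs
  imports Complex_Main
begin

text \<open>A pixel is identified with its lower-left corner.\<close>
type_synonym pixel = "int \<times> int"

definition adj :: "pixel \<Rightarrow> pixel \<Rightarrow> bool" where
  "adj a b \<longleftrightarrow> \<bar>fst a - fst b\<bar> + \<bar>snd a - snd b\<bar> = 1"

definition is_path :: "pixel set \<Rightarrow> pixel list \<Rightarrow> bool" where
  "is_path P xs \<longleftrightarrow> xs \<noteq> [] \<and> set xs \<subseteq> P \<and>
     (\<forall>i. Suc i < length xs \<longrightarrow> adj (xs ! i) (xs ! Suc i))"

definition domain :: "pixel set \<Rightarrow> bool" where
  "domain P \<longleftrightarrow> finite P \<and> P \<noteq> {} \<and>
     (\<forall>a\<in>P. \<forall>b\<in>P. \<exists>xs. is_path P xs \<and> hd xs = a \<and> last xs = b)"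

definition gdist :: "pixel set \<Rightarrow> pixel \<Rightarrow> pixel \<Rightarrow> nat" where
  "gdist P a b = (LEAST n. \<exists>xs. is_path P xs \<and> hd xs = a \<and> last xs = b \<and> length xs = Suc n)"

text \<open>A boundary pixel has a side not shared with another pixel of P,
  i.e. some adjacent pixel lies outside P.\<close>
definition boundary_pixel :: "pixel set \<Rightarrow> pixel \<Rightarrow> bool" where
  "boundary_pixel P q \<longleftrightarrow> q \<in> P \<and> (\<exists>r. adj q r \<and> r \<notin> P)"

definition vdist :: "pixel set \<Rightarrow> pixel \<Rightarrow> nat" where
  "vdist P q = 1 + Min {gdist P q b | b. boundary_pixel P b}"

text \<open>Horizontal comb with handle column c, rows y0..y0+H-1, and root p.\<close>
definition comb_with_root :: "pixel set \<Rightarrow> pixel \<Rightarrow> bool" where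
  "comb_with_root C p \<longleftrightarrow> (\<exists>y0 H c a. H \<ge> (1::int) \<and>
     ((C = {(x, y). y0 \<le> y \<and> y \<le> y0 + H - 1 \<and> a y \<le> x \<and> x \<le> c} \<and>
        (\<forall>y. y0 \<le> y \<and> y \<le> y0 + H - 1 \<longrightarrow> a y \<le> c)) \<or>
      (C = {(x, y). y0 \<le> y \<and> y \<le> y0 + H - 1 \<and> c \<le> x \<and> x \<le> a y} \<and>
        (\<forall>y. y0 \<le> y \<and> y \<le> y0 + H - 1 \<longrightarrow> c \<le> a y))) \<and>
     (p = (c, y0) \<or> p = (c, y0 + H - 1)))"

text \<open>Snow after the snowblower enters u and throws all snow on u onto t.\<close>
definition throw :: "pixel set \<Rightarrow> (pixel \<Rightarrow> nat) \<Rightarrow> pixel \<Rightarrow> pixel \<Rightarrow> (pixel \<Rightarrow> nat)" where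
  "throw P s u t = (if t \<in> P then (s(u := 0))(t := s t + s u) else s(u := 0))"

text \<open>A valid move sequence of n moves in the default model: positions pos 0..n,
  throw targets tgt 0..n-1, snow states snow 0..n.\<close>
definition valid_run :: "pixel set \<Rightarrow> nat \<Rightarrow> nat \<Rightarrow> (nat \<Rightarrow> pixel) \<Rightarrow> (nat \<Rightarrow> pixel)
    \<Rightarrow> (nat \<Rightarrow> pixel \<Rightarrow> nat) \<Rightarrow> bool" where
  "valid_run P D n pos tgt snow \<longleftrightarrow>
     (\<forall>i<n. adj (pos i) (pos (Suc i)) \<and> pos (Suc i) \<in> P \<and>
            adj (pos (Suc i)) (tgt i) \<and>
            snow (Suc i) = throw P (snow i) (pos (Suc i)) (tgt i)) \<and>
     (\<forall>i\<le>n. \<forall>q\<in>P. snow i q \<le> D)"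

end

theory Submission
  imports Defs
begin

text \<open>The snowblower follows a closed walk from the root \<open>p\<close> through all of \<open>C\<close>. On entering
  a pixel it throws the snow there onto the next pixel of the walk, thus pushing a growing pile
  ahead; back at \<open>p\<close>, it throws the pile out of \<open>P\<close> across a boundary side of \<open>p\<close>. The pile
  never exceeds \<open>D\<close> if the walk is a sequence of trips from \<open>p\<close>, each reaching at most \<open>D\<close> new
  pixels. The trips collect the pixels \<open>D\<close> at a time, tooth by tooth and each tooth from the
  handle outwards. A trip whose first new pixel is at distance \<open>d\<close> from \<open>p\<close> has at most
  \<open>2 d + 2 D\<close> moves, and \<open>d\<close> exceeds the distance of every pixel of the previous trip by at
  most \<open>D\<close>. Summing up, \<open>D\<close> times the number of moves is at most
  \<open>2 \<Sum> vdist + 4 D |C - {p}|\<close>, so the bound \<open>4 |C - {p}| + 2 \<Delta>\<close> holds for every \<open>D\<close>.\<close>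

section \<open>Pushing snow along a closed walk\<close>

lemma in_set_tlD: "x \<in> set (tl xs) \<Longrightarrow> x \<in> set xs"
  by (cases xs) auto

definition chain_from_to :: "('a \<Rightarrow> 'a \<Rightarrow> bool) \<Rightarrow> 'a list \<Rightarrow> 'a \<Rightarrow> 'a \<Rightarrow> bool" where
  "chain_from_to R xs x y \<longleftrightarrow> xs \<noteq> [] \<and> hd xs = x \<and> last xs = y \<and> successively R xs"

lemma chain_from_to_singleton: "chain_from_to R [x] x x"
  by (simp add: chain_from_to_def)

lemma chain_from_to_append_tl:
  assumes "chain_from_to R xs x y" "chain_from_to R ys y z"
  shows "chain_from_to R (xs @ tl ys) x z"
proof (cases "tl ys")
  case Nil
  then have "ys = [y]" "y = z" using assms(2) by (cases ys; auto simp: chain_from_to_def)+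
  then show ?thesis using assms(1) by (simp add: chain_from_to_def)
next
  case (Cons u us)
  then have "ys = y # u # us" using assms(2) by (cases ys) (auto simp: chain_from_to_def)
  then show ?thesis using assms Cons
    by (auto simp: chain_from_to_def successively_append_iff successively_Cons)
qed

lemma chain_from_to_map:
  assumes "chain_from_to R xs x y" "\<And>a b. R a b \<Longrightarrow> S (f a) (f b)"
  shows "chain_from_to S (map f xs) (f x) (f y)"
  using assms successively_mono[of R xs "\<lambda>a b. S (f a) (f b)"]
  by (auto simp: chain_from_to_def hd_map last_map successively_map)

text \<open>Every step of the walk \<open>W\<close> is preceded by a visit of \<open>p\<close> after which at most \<open>D\<close>
  pixels new to \<open>W\<close> have been reached: their snow is the pile being pushed.\<close>
definition pile_bounded :: "nat \<Rightarrow> 'a \<Rightarrow> 'a list \<Rightarrow> bool" where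
  "pile_bounded D p W \<longleftrightarrow> (\<forall>i. Suc i < length W \<longrightarrow>
     (\<exists>j\<le>i. W ! j = p \<and> card (set (take (Suc (Suc i)) W) - set (take (Suc j) W)) \<le> D))"

lemma pile_bounded_singleton: "pile_bounded D p [x]"
  by (simp add: pile_bounded_def)

lemma pile_bounded_append_tl:
  assumes "pile_bounded D p W" "chain_from_to R W x p" "chain_from_to R T p y"
    and "card (set T - set W) \<le> D"
  shows "pile_bounded D p (W @ tl T)"
  unfolding pile_bounded_def
proof (intro allI impI)
  fix i assume i: "Suc i < length (W @ tl T)"
  show "\<exists>j\<le>i. (W @ tl T) ! j = p \<and>
          card (set (take (Suc (Suc i)) (W @ tl T)) - set (take (Suc j) (W @ tl T))) \<le> D"
  proof (cases "Suc i < length W")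
    case True
    then obtain j where j: "j \<le> i" "W ! j = p"
      and "card (set (take (Suc (Suc i)) W) - set (take (Suc j) W)) \<le> D"
      using assms(1) unfolding pile_bounded_def by blast
    moreover have "take (Suc (Suc i)) (W @ tl T) = take (Suc (Suc i)) W"
      "take (Suc j) (W @ tl T) = take (Suc j) W" "(W @ tl T) ! j = W ! j"
      using True j(1) by (simp_all add: nth_append)
    ultimately show ?thesis by auto
  next
    case False
    define j where "j = length W - 1"
    have W: "W \<noteq> []" "last W = p" using assms(2) by (auto simp: chain_from_to_def)
    have j: "j \<le> i" "Suc j = length W" using W(1) False by (auto simp: j_def)
    have "(W @ tl T) ! j = p"
      using W j(2) by (simp add: nth_append last_conv_nth j_def)
    moreover have "take (Suc j) (W @ tl T) = W" using j(2) by simp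
    moreover have "set (W @ tl T) \<subseteq> set W \<union> set T" using in_set_tlD[of _ T] by auto
    then have "set (take (Suc (Suc i)) (W @ tl T)) \<subseteq> set W \<union> set T"
      using set_take_subset[of "Suc (Suc i)" "W @ tl T"] by blast
    then have "card (set (take (Suc (Suc i)) (W @ tl T)) - set W) \<le> card (set T - set W)"
      by (intro card_mono) blast+
    ultimately show ?thesis using j(1) assms(4) by (intro exI[of _ j]) auto
  qed
qed

lemma pile_bounded_map:
  assumes "inj f" "pile_bounded D p W"
  shows "pile_bounded D (f p) (map f W)"
  unfolding pile_bounded_def
proof (intro allI impI)
  fix i assume i: "Suc i < length (map f W)"
  then obtain j where j: "j \<le> i" "W ! j = p"
    and card_le: "card (set (take (Suc (Suc i)) W) - set (take (Suc j) W)) \<le> D"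
    using assms(2) unfolding pile_bounded_def by auto
  have "set (take (Suc (Suc i)) (map f W)) - set (take (Suc j) (map f W)) =
        f ` (set (take (Suc (Suc i)) W) - set (take (Suc j) W))"
    using assms(1) by (simp add: take_map image_set_diff)
  then have "card (set (take (Suc (Suc i)) (map f W)) - set (take (Suc j) (map f W))) \<le> D"
    using card_le card_image_le[of "set (take (Suc (Suc i)) W) - set (take (Suc j) W)" f] by simp
  then show "\<exists>j\<le>i. map f W ! j = f p \<and>
       card (set (take (Suc (Suc i)) (map f W)) - set (take (Suc j) (map f W))) \<le> D"
    using j i by (intro exI[of _ j]) auto
qed

primrec last_visit :: "'a list \<Rightarrow> 'a \<Rightarrow> nat \<Rightarrow> nat" where
  "last_visit W p 0 = 0"
| "last_visit W p (Suc i) = (if W ! Suc i = p then Suc i else last_visit W p i)"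

lemma last_visit_le: "last_visit W p i \<le> i"
  by (induction i) auto

lemma last_visit_ge: "j \<le> i \<Longrightarrow> W ! j = p \<Longrightarrow> j \<le> last_visit W p i"
proof (induction i)
  case (Suc i)
  then show ?case by (cases "j = Suc i") auto
qed simp

lemma adj_imp_neq: "adj a b \<Longrightarrow> a \<noteq> b"
  by (auto simp: adj_def)

locale snow_walk =
  fixes P :: "pixel set" and D :: nat and s0 :: "pixel \<Rightarrow> nat"
    and W :: "pixel list" and p r :: pixel
  assumes walk: "chain_from_to adj W p p" and walk_in: "set W \<subseteq> P"
    and exit: "adj p r" "r \<notin> P"
    and pile: "pile_bounded D p W"
    and s0_le: "\<forall>q\<in>P. s0 q \<le> D" and s0_root: "s0 p = 0" and s0_walk: "\<forall>q\<in>set W. s0 q \<le> 1"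
begin

definition moves :: nat where "moves = length W - 1"

definition target :: "nat \<Rightarrow> pixel" where
  "target i = (if W ! Suc i = p then r else W ! Suc (Suc i))"

definition snow_state :: "nat \<Rightarrow> pixel \<Rightarrow> nat" where
  "snow_state = rec_nat s0 (\<lambda>i s. throw P s (W ! Suc i) (target i))"

definition visited :: "nat \<Rightarrow> pixel set" where
  "visited i = set (take (Suc i) W)"

definition collected :: "nat \<Rightarrow> nat" where
  "collected i = (\<Sum>x\<in>visited i - visited (last_visit W p i). s0 x)"

text \<open>Invariant of the run: the pixels visited so far are clean, except that the pixel to be
  entered next also carries the pile collected since the last visit of the root.\<close>
definition predicted :: "nat \<Rightarrow> pixel \<Rightarrow> nat" where
  "predicted i q = (if q \<in> visited i then 0 else s0 q) +
                   (if i < moves \<and> q = W ! Suc i then collected i else 0)"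

lemma length_walk: "length W = Suc moves"
  using walk by (simp add: moves_def chain_from_to_def)

lemma walk_nth_0: "W ! 0 = p" and walk_nth_moves: "W ! moves = p"
  using walk by (auto simp: moves_def chain_from_to_def hd_conv_nth last_conv_nth)

lemma walk_nth_in: "i \<le> moves \<Longrightarrow> W ! i \<in> set W"
  using length_walk by simp

lemma adj_walk_nth: "i < moves \<Longrightarrow> adj (W ! i) (W ! Suc i)"
  using walk length_walk by (simp add: chain_from_to_def successively_conv_nth)

lemma less_moves_if_not_root: "i < moves \<Longrightarrow> W ! Suc i \<noteq> p \<Longrightarrow> Suc i < moves"
  using walk_nth_moves by (metis Suc_lessI)

lemma visited_Suc: "i < moves \<Longrightarrow> visited (Suc i) = insert (W ! Suc i) (visited i)"
  using length_walk by (simp add: visited_def take_Suc_conv_app_nth[of "Suc i" W])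

lemma visited_0: "visited 0 = {p}"
  using length_walk walk_nth_0 by (simp add: visited_def take_Suc_conv_app_nth[of 0 W])

lemma visited_mono: "i \<le> j \<Longrightarrow> visited i \<subseteq> visited j"
  by (simp add: visited_def set_take_subset_set_take)

lemma root_visited: "p \<in> visited i"
  using visited_mono[of 0 i] visited_0 by auto

lemma visited_subset: "visited i \<subseteq> set W"
  by (simp add: visited_def set_take_subset)

lemma predicted_next_eq:
  assumes i: "i < moves"
  shows "predicted i (W ! Suc i) = (\<Sum>x\<in>visited (Suc i) - visited (last_visit W p i). s0 x)"
proof -
  define u where "u = W ! Suc i"
  define L where "L = visited (last_visit W p i)"
  have L: "L \<subseteq> visited i" using visited_mono[OF last_visit_le] by (simp add: L_def)
  have pred: "predicted i u = (if u \<in> visited i then 0 else s0 u) + sum s0 (visited i - L)"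
    using i by (simp add: predicted_def collected_def u_def L_def)
  show ?thesis
  proof (cases "u \<in> visited i")
    case True
    then have "visited (Suc i) = visited i" using visited_Suc[OF i] by (auto simp: u_def)
    then show ?thesis using True pred by (simp add: L_def u_def)
  next
    case False
    then have "visited (Suc i) - L = insert u (visited i - L)"
      using visited_Suc[OF i] L by (auto simp: u_def)
    moreover have "finite (visited i - L)" by (simp add: visited_def)
    ultimately show ?thesis using False pred by (simp add: L_def u_def)
  qed
qed

lemma predicted_step_root:
  assumes "i < moves" "W ! Suc i = p"
  shows "throw P (predicted i) (W ! Suc i) (target i) = predicted (Suc i)"
proof -
  have "collected (Suc i) = 0" using assms by (simp add: collected_def)
  then show ?thesis
    using assms exit visited_Suc root_visited
    by (auto simp: fun_eq_iff throw_def target_def predicted_def insert_absorb)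
qed

lemma predicted_step_push:
  assumes i: "i < moves" and u: "W ! Suc i \<noteq> p"
  shows "throw P (predicted i) (W ! Suc i) (target i) = predicted (Suc i)"
proof -
  define u t where "u = W ! Suc i" and "t = W ! Suc (Suc i)"
  have i': "Suc i < moves" using less_moves_if_not_root[OF i u] .
  have "t \<in> P" using walk_in walk_nth_in[of "Suc (Suc i)"] i' by (auto simp: t_def)
  moreover have "t \<noteq> u" using adj_imp_neq[OF adj_walk_nth[OF i']] by (simp add: t_def u_def)
  moreover have "collected (Suc i) = predicted i u"
    using predicted_next_eq[OF i] u by (simp add: collected_def u_def)
  ultimately show ?thesis
    using i i' u visited_Suc[OF i]
    by (auto simp: fun_eq_iff throw_def target_def predicted_def simp flip: u_def t_def)
qed

lemma snow_state_eq_predicted: "i \<le> moves \<Longrightarrow> snow_state i = predicted i"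
proof (induction i)
  case 0
  show ?case using visited_0 s0_root by (auto simp: fun_eq_iff snow_state_def predicted_def collected_def)
next
  case (Suc i)
  then have "snow_state (Suc i) = throw P (predicted i) (W ! Suc i) (target i)"
    by (simp add: snow_state_def)
  then show ?case
    using predicted_step_root predicted_step_push Suc.prems by (cases "W ! Suc i = p") auto
qed

lemma predicted_le:
  assumes "i \<le> moves" "q \<in> P"
  shows "predicted i q \<le> D"
proof (cases "i < moves \<and> q = W ! Suc i")
  case True
  define A where "A = visited (Suc i) - visited (last_visit W p i)"
  have "Suc i < length W" using True length_walk by simp
  then obtain j where j: "j \<le> i" "W ! j = p" and card_le: "card (visited (Suc i) - visited j) \<le> D"
    using pile unfolding pile_bounded_def visited_def by blast
  have "visited j \<subseteq> visited (last_visit W p i)"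
    using visited_mono last_visit_ge[OF j] by blast
  then have "card A \<le> card (visited (Suc i) - visited j)"
    unfolding A_def by (intro card_mono) (auto simp: visited_def)
  moreover have "sum s0 A \<le> (\<Sum>x\<in>A. 1)"
  proof (rule sum_mono)
    fix x assume "x \<in> A"
    then have "x \<in> set W" using visited_subset by (auto simp: A_def)
    then show "s0 x \<le> 1" using s0_walk by blast
  qed
  ultimately have "sum s0 A \<le> D" using card_le by simp
  then show ?thesis using True predicted_next_eq by (simp add: A_def)
next
  case False
  then have "predicted i q \<le> s0 q" unfolding predicted_def if_not_P[OF False] by simp
  then show ?thesis using s0_le assms(2) by fastforce
qed

theorem clearing_run:
  "\<exists>pos tgt snow. valid_run P D moves pos tgt snow \<and> pos 0 = p \<and> snow 0 = s0 \<and>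
     (\<forall>i<moves. pos (Suc i) \<in> set W \<and> (tgt i \<in> set W \<or> tgt i \<notin> P)) \<and>
     pos moves = p \<and> (\<forall>q\<in>set W. snow moves q = 0)"
proof (intro exI conjI)
  show "valid_run P D moves ((!) W) target snow_state"
    unfolding valid_run_def
  proof (intro conjI allI impI ballI)
    fix i assume i: "i < moves"
    show "adj (W ! i) (W ! Suc i)" using adj_walk_nth[OF i] .
    show "W ! Suc i \<in> P" using walk_in walk_nth_in[of "Suc i"] i by auto
    show "adj (W ! Suc i) (target i)"
      using exit adj_walk_nth less_moves_if_not_root[OF i] by (simp add: target_def)
    show "snow_state (Suc i) = throw P (snow_state i) (W ! Suc i) (target i)" by (simp add: snow_state_def)
  next
    fix i q assume "i \<le> moves" "q \<in> P"
    then show "snow_state i q \<le> D" using snow_state_eq_predicted predicted_le by simp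
  qed
  show "\<forall>i<moves. W ! Suc i \<in> set W \<and> (target i \<in> set W \<or> target i \<notin> P)"
  proof (intro allI impI conjI)
    fix i assume i: "i < moves"
    show "W ! Suc i \<in> set W" using i walk_nth_in by simp
    show "target i \<in> set W \<or> target i \<notin> P"
      using exit walk_nth_in[of "Suc (Suc i)"] less_moves_if_not_root[OF i] by (simp add: target_def Suc_le_eq)
  qed
  show "\<forall>q\<in>set W. snow_state moves q = 0"
    using snow_state_eq_predicted[of moves] length_walk by (simp add: predicted_def visited_def)
  show "W ! 0 = p" by (rule walk_nth_0)
  show "W ! moves = p" by (rule walk_nth_moves)
  show "snow_state 0 = s0" by (simp add: snow_state_def)
qed

end

section \<open>Tours of a normalised comb\<close>

definition grid_adj :: "nat \<times> nat \<Rightarrow> nat \<times> nat \<Rightarrow> bool" where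
  "grid_adj x y \<longleftrightarrow> (fst x = fst y \<and> (snd y = Suc (snd x) \<or> snd x = Suc (snd y))) \<or>
                    (snd x = snd y \<and> (fst y = Suc (fst x) \<or> fst x = Suc (fst y)))"

definition nat_segment :: "nat \<Rightarrow> nat \<Rightarrow> nat list" where
  "nat_segment a b = (if a \<le> b then [a..<Suc b] else rev [b..<Suc a])"

lemma chain_nat_segment: "chain_from_to (\<lambda>x y. y = Suc x \<or> x = Suc y) (nat_segment a b) a b"
proof -
  have "successively (\<lambda>x y. y = Suc x \<or> x = Suc y) [a..<b]" for a b
    by (auto simp: successively_conv_nth)
  then show ?thesis
    by (auto simp: chain_from_to_def nat_segment_def successively_rev hd_rev last_rev hd_upt
        simp del: upt_Suc intro: successively_mono)
qed

lemma length_nat_segment: "length (nat_segment a b) = Suc ((a - b) + (b - a))"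
  by (auto simp: nat_segment_def Suc_diff_le simp del: upt_Suc)

lemma set_nat_segment: "set (nat_segment a b) = {min a b..max a b}"
  by (auto simp: nat_segment_def simp del: upt_Suc)

lemma chain_row_segment: "chain_from_to grid_adj (map (Pair h) (nat_segment a b)) (h, a) (h, b)"
  by (rule chain_from_to_map[OF chain_nat_segment]) (auto simp: grid_adj_def)

lemma chain_handle_segment: "chain_from_to grid_adj (map (\<lambda>t. (t, 0)) (nat_segment a b)) (a, 0) (b, 0)"
  by (rule chain_from_to_map[OF chain_nat_segment]) (auto simp: grid_adj_def)

text \<open>A cell \<open>(h, j)\<close> of a normalised comb lies on tooth \<open>h\<close> at distance \<open>j\<close> from the
  handle, which is the column \<open>j = 0\<close>; the root is \<open>(0, 0)\<close>.\<close>
fun comb_path :: "nat \<times> nat \<Rightarrow> nat \<times> nat \<Rightarrow> (nat \<times> nat) list" where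
  "comb_path (h, j) (h', j') =
     (if h = h' then map (Pair h) (nat_segment j j')
      else map (Pair h) (nat_segment j 0) @ tl (map (\<lambda>t. (t, 0)) (nat_segment h h'))
           @ tl (map (Pair h') (nat_segment 0 j')))"

fun comb_dist :: "nat \<times> nat \<Rightarrow> nat \<times> nat \<Rightarrow> nat" where
  "comb_dist (h, j) (h', j') = (if h = h' then (j - j') + (j' - j) else j + (h - h') + (h' - h) + j')"

definition root_dist :: "nat \<times> nat \<Rightarrow> nat" where
  "root_dist x = fst x + snd x"

lemma chain_comb_path: "chain_from_to grid_adj (comb_path x y) x y"
proof (cases x, cases y)
  fix h j h' j' assume xy: "x = (h, j)" "y = (h', j')"
  show ?thesis
  proof (cases "h = h'")
    case True
    then show ?thesis using chain_row_segment by (simp add: xy)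
  next
    case False
    have "chain_from_to grid_adj ((map (Pair h) (nat_segment j 0) @ tl (map (\<lambda>t. (t, 0)) (nat_segment h h')))
        @ tl (map (Pair h') (nat_segment 0 j'))) (h, j) (h', j')"
      by (rule chain_from_to_append_tl[OF
            chain_from_to_append_tl[OF chain_row_segment chain_handle_segment] chain_row_segment])
    then show ?thesis using False by (simp add: xy)
  qed
qed

lemma length_comb_path: "length (comb_path x y) = Suc (comb_dist x y)"
  by (cases x, cases y) (simp add: length_nat_segment)

lemma set_comb_path:
  assumes "z \<in> set (comb_path x y)"
  shows "(fst z = fst x \<and> snd z \<le> snd x) \<or> (fst z = fst y \<and> snd z \<le> snd y) \<or>
         (snd z = 0 \<and> min (fst x) (fst y) \<le> fst z \<and> fst z \<le> max (fst x) (fst y))"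
proof (cases x, cases y)
  fix h j h' j' assume xy: "x = (h, j)" "y = (h', j')"
  show ?thesis
  proof (cases "h = h'")
    case True
    then show ?thesis using assms set_nat_segment by (auto simp: xy)
  next
    case False
    then have "z \<in> set (map (Pair h) (nat_segment j 0)) \<or> z \<in> set (map (\<lambda>t. (t, 0)) (nat_segment h h'))
       \<or> z \<in> set (map (Pair h') (nat_segment 0 j'))"
      using assms by (auto simp: xy dest: in_set_tlD)
    then show ?thesis using set_nat_segment by (auto simp: xy)
  qed
qed

lemma comb_dist_root: "comb_dist (0, 0) x = root_dist x" "comb_dist x (0, 0) = root_dist x"
  by (cases x; simp add: root_dist_def)+

fun tour :: "(nat \<times> nat) list \<Rightarrow> (nat \<times> nat) list" where
  "tour [] = []"
| "tour [x] = [x]"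
| "tour (x # y # zs) = comb_path x y @ tl (tour (y # zs))"

fun tour_len :: "(nat \<times> nat) list \<Rightarrow> nat" where
  "tour_len (x # y # zs) = comb_dist x y + tour_len (y # zs)"
| "tour_len _ = 0"

lemma chain_tour: "zs \<noteq> [] \<Longrightarrow> chain_from_to grid_adj (tour zs) (hd zs) (last zs)"
  by (induction zs rule: tour.induct)
    (auto simp: chain_from_to_singleton intro: chain_from_to_append_tl chain_comb_path)

lemma length_tour: "zs \<noteq> [] \<Longrightarrow> length (tour zs) = Suc (tour_len zs)"
proof (induction zs rule: tour.induct)
  case (3 x y zs)
  then show ?case using chain_tour[of "y # zs"] length_comb_path[of x y]
    by (cases "tour (y # zs)") (auto simp: chain_from_to_def)
qed auto

lemma set_subset_tour: "set zs \<subseteq> set (tour zs)"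
proof (induction zs rule: tour.induct)
  case (3 x y zs)
  have "x \<in> set (comb_path x y)" "y \<in> set (comb_path x y)"
    using chain_comb_path[of x y] unfolding chain_from_to_def by (metis hd_in_set last_in_set)+
  moreover have "set (tour (y # zs)) \<subseteq> insert y (set (tl (tour (y # zs))))"
    using chain_tour[of "y # zs"] by (cases "tour (y # zs)") (auto simp: chain_from_to_def)
  ultimately show ?case using "3.IH" by auto
qed auto

lemma set_tour_subset:
  "(\<And>x y. x \<in> A \<Longrightarrow> y \<in> A \<Longrightarrow> set (comb_path x y) \<subseteq> A) \<Longrightarrow> set zs \<subseteq> A \<Longrightarrow> set (tour zs) \<subseteq> A"
  by (induction zs rule: tour.induct) (auto dest: in_set_tlD)

text \<open>Tooth \<open>h\<close> has the cells \<open>(h, j)\<close> with \<open>j < w h\<close>; \<open>cell\<close> enumerates them tooth by tooth,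
  each tooth from the handle outwards, and \<open>rank\<close> is its inverse.\<close>
locale comb_shape =
  fixes w :: "nat \<Rightarrow> nat"
  assumes w_pos: "\<And>h. 0 < w h"
begin

definition next_cell :: "nat \<times> nat \<Rightarrow> nat \<times> nat" where
  "next_cell x = (if Suc (snd x) < w (fst x) then (fst x, Suc (snd x)) else (Suc (fst x), 0))"

definition cell :: "nat \<Rightarrow> nat \<times> nat" where
  "cell i = (next_cell ^^ i) (0, 0)"

definition rank :: "nat \<times> nat \<Rightarrow> nat" where
  "rank x = (\<Sum>t<fst x. w t) + snd x"

lemma cell_0: "cell 0 = (0, 0)" and cell_Suc: "cell (Suc i) = next_cell (cell i)"
  by (simp_all add: cell_def)

lemma cell_in_comb: "snd (cell i) < w (fst (cell i))"
  by (induction i) (auto simp: cell_0 cell_Suc next_cell_def w_pos)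

lemma rank_cell: "rank (cell i) = i"
proof (induction i)
  case (Suc i)
  then show ?case using cell_in_comb[of i] by (auto simp: cell_Suc next_cell_def rank_def)
qed (simp add: cell_0 rank_def)

lemma rank_less_of_fst_less:
  assumes "snd x < w (fst x)" "fst x < fst y"
  shows "rank x < rank y"
proof -
  have "rank x < (\<Sum>t<Suc (fst x). w t)" using assms by (simp add: rank_def)
  also have "\<dots> \<le> (\<Sum>t<fst y. w t)" using assms by (intro sum_mono2) auto
  also have "\<dots> \<le> rank y" by (simp add: rank_def)
  finally show ?thesis .
qed

lemma rank_inj:
  assumes "snd x < w (fst x)" "snd y < w (fst y)" "rank x = rank y"
  shows "x = y"
proof -
  have "fst x = fst y"
    using assms rank_less_of_fst_less by (metis less_irrefl linorder_neqE_nat)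
  then show ?thesis using assms(3) by (simp add: rank_def prod_eq_iff)
qed

lemma cell_rank: "snd x < w (fst x) \<Longrightarrow> cell (rank x) = x"
  using rank_inj[OF cell_in_comb] rank_cell by metis

lemma inj_cell: "inj cell"
  by (metis injI rank_cell)

lemma cell_image_atMost: "cell ` {..b} = {x. snd x < w (fst x) \<and> rank x \<le> b}"
  using cell_in_comb rank_cell cell_rank by (auto intro!: image_eqI[of _ cell "rank _"])

lemma comb_cells_eq_cell_image: "{x. fst x < H \<and> snd x < w (fst x)} = cell ` {..<(\<Sum>t<H. w t)}"
proof -
  have key: "fst x < H \<longleftrightarrow> rank x < (\<Sum>t<H. w t)" if "snd x < w (fst x)" for x
  proof
    assume "fst x < H"
    then show "rank x < (\<Sum>t<H. w t)" using rank_less_of_fst_less[OF that, of "(H, 0)"]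
      by (simp add: rank_def)
  next
    assume "rank x < (\<Sum>t<H. w t)"
    moreover have "\<not> fst x < H \<Longrightarrow> (\<Sum>t<H. w t) \<le> rank x"
      using sum_mono2[of "{..<fst x}" "{..<H}" w] by (simp add: rank_def)
    ultimately show "fst x < H" by linarith
  qed
  show ?thesis
  proof (intro set_eqI iffI)
    fix x assume "x \<in> {x. fst x < H \<and> snd x < w (fst x)}"
    then show "x \<in> cell ` {..<(\<Sum>t<H. w t)}"
      using key[of x] cell_rank[of x] by (auto intro!: image_eqI[of _ cell "rank x"])
  next
    fix x assume "x \<in> cell ` {..<(\<Sum>t<H. w t)}"
    then obtain i where "x = cell i" "i < (\<Sum>t<H. w t)" by auto
    then show "x \<in> {x. fst x < H \<and> snd x < w (fst x)}"
      using key[of x] cell_in_comb[of i] rank_cell[of i] by auto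
  qed
qed

lemma root_dist_next_cell: "root_dist (next_cell x) \<le> Suc (root_dist x)"
  by (auto simp: next_cell_def root_dist_def)

lemma comb_dist_next_cell: "comb_dist x (next_cell x) + root_dist (next_cell x) \<le> root_dist x + 2"
  by (cases x) (auto simp: next_cell_def root_dist_def)

lemma root_dist_cell_le: "i \<le> k \<Longrightarrow> root_dist (cell k) \<le> root_dist (cell i) + (k - i)"
proof (induction k)
  case (Suc k)
  then show ?case
    using root_dist_next_cell[of "cell k"] by (cases "i = Suc k") (auto simp: cell_Suc)
qed simp

lemma root_dist_cell_pos: "0 < i \<Longrightarrow> 0 < root_dist (cell i)"
proof -
  assume "0 < i"
  then have "cell i \<noteq> (0, 0)" using rank_cell[of i] by (auto simp: rank_def)
  then show ?thesis by (auto simp: root_dist_def prod_eq_iff)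
qed

lemma comb_path_subset_cells:
  assumes "x \<in> cell ` {..b}" "y \<in> cell ` {..b}"
  shows "set (comb_path x y) \<subseteq> cell ` {..b}"
proof
  fix z assume z: "z \<in> set (comb_path x y)"
  have x: "snd x < w (fst x)" "rank x \<le> b" and y: "snd y < w (fst y)" "rank y \<le> b"
    using assms by (auto simp: cell_image_atMost)
  from set_comb_path[OF z] show "z \<in> cell ` {..b}"
  proof (elim disjE conjE)
    assume "snd z = 0" "min (fst x) (fst y) \<le> fst z" "fst z \<le> max (fst x) (fst y)"
    moreover have "rank (fst z, 0) \<le> rank (max (fst x) (fst y), 0)"
      using \<open>fst z \<le> max (fst x) (fst y)\<close> by (simp add: rank_def sum_mono2)
    moreover have "rank (max (fst x) (fst y), 0) \<le> b"
      using x y by (auto simp: rank_def max_def)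
    ultimately show ?thesis using w_pos by (auto simp: cell_image_atMost rank_def)
  qed (use x y in \<open>auto simp: cell_image_atMost rank_def\<close>)
qed

definition trip :: "nat \<Rightarrow> nat \<Rightarrow> (nat \<times> nat) list" where
  "trip a b = tour ((0, 0) # map cell [Suc a..<Suc b] @ [(0, 0)])"

lemma chain_trip: "chain_from_to grid_adj (trip a b) (0, 0) (0, 0)"
  using chain_tour[of "(0, 0) # map cell [Suc a..<Suc b] @ [(0, 0)]"] by (simp add: trip_def)

lemma tour_len_cells:
  "i \<le> b \<Longrightarrow> tour_len (map cell [i..<Suc b] @ [(0, 0)]) + 2 * i \<le> root_dist (cell i) + 2 * b"
proof (induction "b - i" arbitrary: i)
  case 0
  then show ?case by (simp add: comb_dist_root)
next
  case (Suc k)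
  then have "i < b" by simp
  define rest where "rest = map cell [Suc (Suc i)..<Suc b] @ [(0, 0)]"
  have "map cell [Suc i..<Suc b] @ [(0, 0)] = cell (Suc i) # rest"
    and "map cell [i..<Suc b] @ [(0, 0)] = cell i # cell (Suc i) # rest"
    using \<open>i < b\<close> by (simp_all add: rest_def upt_rec)
  moreover have "tour_len (cell (Suc i) # rest) + 2 * Suc i \<le> root_dist (cell (Suc i)) + 2 * b"
    using Suc \<open>i < b\<close> \<open>map cell [Suc i..<Suc b] @ [(0, 0)] = cell (Suc i) # rest\<close>
    by (metis Suc_diff_Suc Suc_leI Suc_inject)
  ultimately show ?case using comb_dist_next_cell[of "cell i"] by (simp add: cell_Suc)
qed

lemma length_trip_le:
  assumes "a < b"
  shows "length (trip a b) + 2 * a + 1 \<le> 2 * root_dist (cell (Suc a)) + 2 * b"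
proof -
  define rest where "rest = map cell [Suc (Suc a)..<Suc b] @ [(0, 0)]"
  have eq: "map cell [Suc a..<Suc b] @ [(0, 0)] = cell (Suc a) # rest"
    using assms by (simp add: rest_def upt_rec)
  have "length (trip a b) = Suc (root_dist (cell (Suc a)) + tour_len (cell (Suc a) # rest))"
    unfolding trip_def eq by (simp add: length_tour comb_dist_root del: tour.simps)
  moreover have "tour_len (cell (Suc a) # rest) + 2 * Suc a \<le> root_dist (cell (Suc a)) + 2 * b"
    using tour_len_cells[of "Suc a" b] assms unfolding eq by simp
  ultimately show ?thesis by simp
qed

lemma set_trip_subset: "set (trip a b) \<subseteq> cell ` {..b}"
proof -
  have "(0, 0) \<in> cell ` {..b}" using cell_0 by force
  then have "set ((0, 0) # map cell [Suc a..<Suc b] @ [(0, 0)]) \<subseteq> cell ` {..b}" by auto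
  then show ?thesis unfolding trip_def by (intro set_tour_subset comb_path_subset_cells)
qed

lemma cells_subset_trip: "cell ` {Suc a..b} \<subseteq> set (trip a b)"
proof -
  have "cell ` {Suc a..b} \<subseteq> set ((0, 0) # map cell [Suc a..<Suc b] @ [(0, 0)])"
    by (auto simp del: upt_Suc)
  then show ?thesis using set_subset_tour unfolding trip_def by blast
qed

definition covering_tour :: "nat \<Rightarrow> nat \<Rightarrow> (nat \<times> nat) list \<Rightarrow> bool" where
  "covering_tour D a W \<longleftrightarrow>
     chain_from_to grid_adj W (0, 0) (0, 0) \<and> set W = cell ` {..a} \<and> pile_bounded D (0, 0) W"

lemma covering_tour_0: "covering_tour D 0 [(0, 0)]"
  by (simp add: covering_tour_def chain_from_to_singleton pile_bounded_singleton cell_0)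

lemma covering_tour_append_trip:
  assumes W: "covering_tour D a W" and ab: "a < b" "b \<le> a + D"
  shows "covering_tour D b (W @ tl (trip a b))"
proof -
  have set_W: "set W = cell ` {..a}" and chain_W: "chain_from_to grid_adj W (0, 0) (0, 0)"
    and pile_W: "pile_bounded D (0, 0) W"
    using W by (simp_all add: covering_tour_def)
  have "{..b} = {..a} \<union> {Suc a..b}" using ab by auto
  then have split: "cell ` {..b} = cell ` {..a} \<union> cell ` {Suc a..b}" by (metis image_Un)
  have "set (trip a b) - set W \<subseteq> cell ` {Suc a..b}"
    using set_trip_subset[of a b] split set_W by blast
  then have "card (set (trip a b) - set W) \<le> card (cell ` {Suc a..b})"
    by (intro card_mono) auto
  also have "\<dots> \<le> card {Suc a..b}" by (rule card_image_le) simp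
  also have "\<dots> \<le> D" using ab by simp
  finally have "pile_bounded D (0, 0) (W @ tl (trip a b))"
    using pile_bounded_append_tl[OF pile_W chain_W chain_trip] by blast
  moreover have "set (W @ tl (trip a b)) = cell ` {..b}"
  proof -
    have "set (trip a b) = insert (0, 0) (set (tl (trip a b)))"
      using chain_trip[of a b] by (cases "trip a b") (auto simp: chain_from_to_def)
    moreover have "(0, 0) \<in> set W" using set_W cell_0 by force
    ultimately show ?thesis
      using set_W split set_trip_subset[of a b] cells_subset_trip[of a b] by auto
  qed
  ultimately show ?thesis
    using chain_from_to_append_tl[OF chain_W chain_trip] by (simp add: covering_tour_def)
qed

section \<open>Length of the tour\<close>

definition cell_dist_sum :: "nat \<Rightarrow> nat" where
  "cell_dist_sum a = (\<Sum>i = 1..a. 1 + root_dist (cell i))"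

text \<open>The summand \<open>2 D root_dist (cell (Suc a))\<close> pays in advance for the way to the first
  cell of the next trip.\<close>
definition within_budget :: "nat \<Rightarrow> nat \<Rightarrow> (nat \<times> nat) list \<Rightarrow> bool" where
  "within_budget D a W \<longleftrightarrow>
     D * (length W - 1) + 2 * D * root_dist (cell (Suc a)) \<le> 2 * cell_dist_sum a + 4 * D * a + 2 * D"

lemma within_budget_0: "within_budget D 0 [(0, 0)]"
proof -
  have "root_dist (cell (Suc 0)) \<le> 1"
    using root_dist_next_cell[of "(0, 0)"] by (simp add: cell_Suc cell_0 root_dist_def)
  then show ?thesis by (simp add: within_budget_def cell_dist_sum_def)
qed

lemma cell_dist_sum_add:
  "cell_dist_sum (a + D) = cell_dist_sum a + (\<Sum>i = Suc a..a + D. 1 + root_dist (cell i))"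
  unfolding cell_dist_sum_def by (subst sum.ub_add_nat) auto

lemma cell_dist_sum_mono: "a \<le> b \<Longrightarrow> cell_dist_sum a \<le> cell_dist_sum b"
  unfolding cell_dist_sum_def by (rule sum_mono2) auto

lemma root_dist_after_block:
  "D * root_dist (cell (Suc (a + D))) \<le> (\<Sum>i = Suc a..a + D. root_dist (cell i)) + D * D"
proof -
  have "D * root_dist (cell (Suc (a + D))) = (\<Sum>i = Suc a..a + D. root_dist (cell (Suc (a + D))))"
    by simp
  also have "\<dots> \<le> (\<Sum>i = Suc a..a + D. root_dist (cell i) + D)"
  proof (rule sum_mono)
    fix i assume i: "i \<in> {Suc a..a + D}"
    then have "root_dist (cell (Suc (a + D))) \<le> root_dist (cell i) + (Suc (a + D) - i)"
      by (intro root_dist_cell_le) auto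
    then show "root_dist (cell (Suc (a + D))) \<le> root_dist (cell i) + D" using i by auto
  qed
  also have "\<dots> = (\<Sum>i = Suc a..a + D. root_dist (cell i)) + D * D" by (simp add: sum.distrib)
  finally show ?thesis .
qed

lemma length_append_trip:
  "W \<noteq> [] \<Longrightarrow> length (W @ tl (trip a b)) - 1 = (length W - 1) + (length (trip a b) - 1)"
  using chain_trip[of a b] by (cases W) (auto simp: chain_from_to_def)

lemma within_budget_append_block:
  assumes budget: "within_budget D a W" and "W \<noteq> []" "0 < D"
  shows "within_budget D (a + D) (W @ tl (trip a (a + D)))"
proof -
  define l Z X Y where "l = length W - 1" and "Z = length (trip a (a + D)) - 1"
    and "X = root_dist (cell (Suc a))" and "Y = root_dist (cell (Suc (a + D)))"
  define T where "T = (\<Sum>i = Suc a..a + D. root_dist (cell i))"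
  have F1: "D * l + 2 * D * X \<le> 2 * cell_dist_sum a + 4 * D * a + 2 * D"
    using budget by (simp add: within_budget_def l_def X_def)
  have "Z + 2 \<le> 2 * X + 2 * D"
    using length_trip_le[of a "a + D"] \<open>0 < D\<close> by (simp add: Z_def X_def)
  then have "D * (Z + 2) \<le> D * (2 * X + 2 * D)" by (rule mult_le_mono2)
  then have F2: "D * Z + 2 * D \<le> 2 * (D * X) + 2 * (D * D)" by (simp add: algebra_simps)
  have F3: "D * Y \<le> T + D * D" using root_dist_after_block by (simp add: Y_def T_def)
  have F4: "cell_dist_sum a + T \<le> cell_dist_sum (a + D)"
    unfolding cell_dist_sum_add T_def by (simp add: sum_mono)
  have "D * (l + Z) + 2 * D * Y \<le> 2 * cell_dist_sum (a + D) + 4 * D * (a + D) + 2 * D"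
    using F1 F2 F3 F4 by (simp add: algebra_simps)
  then show ?thesis
    using length_append_trip[OF \<open>W \<noteq> []\<close>] by (simp add: within_budget_def l_def Z_def Y_def)
qed

lemma length_append_last_trip_le:
  assumes budget: "within_budget D a W" and "W \<noteq> []" "a < m" "m \<le> a + D"
  shows "D * (length (W @ tl (trip a m)) - 1) \<le> 2 * cell_dist_sum m + 4 * D * m"
proof -
  define l Z X where "l = length W - 1" and "Z = length (trip a m) - 1"
    and "X = root_dist (cell (Suc a))"
  have F1: "D * l + 2 * (D * X) \<le> 2 * cell_dist_sum a + 4 * (D * a) + 2 * D"
    using budget by (simp add: within_budget_def l_def X_def mult.assoc)
  have "Z + 2 * a + 2 \<le> 2 * X + 2 * m"
    using length_trip_le[of a m] \<open>a < m\<close> by (simp add: Z_def X_def)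
  then have "D * (Z + 2 * a + 2) \<le> D * (2 * X + 2 * m)" by (rule mult_le_mono2)
  then have F2: "D * Z + 2 * (D * a) + 2 * D \<le> 2 * (D * X) + 2 * (D * m)"
    by (simp add: algebra_simps)
  have "cell_dist_sum a \<le> cell_dist_sum m" "D * a \<le> D * m"
    using \<open>a < m\<close> cell_dist_sum_mono by simp_all
  moreover have "D * (l + Z) = D * l + D * Z" by (rule add_mult_distrib2)
  ultimately have "D * (l + Z) \<le> 2 * cell_dist_sum m + 4 * (D * m)"
    using F1 F2 by linarith
  then show ?thesis
    using length_append_trip[OF \<open>W \<noteq> []\<close>] by (simp add: l_def Z_def mult.assoc)
qed

lemma length_le_of_within_budget:
  assumes "within_budget D m W"
  shows "D * (length W - 1) \<le> 2 * cell_dist_sum m + 4 * D * m"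
proof -
  have "2 * D \<le> 2 * D * root_dist (cell (Suc m))"
    using root_dist_cell_pos[of "Suc m"] by simp
  then show ?thesis using assms unfolding within_budget_def by linarith
qed

lemma covering_tour_completion:
  assumes "0 < D" "a \<le> m" "covering_tour D a W" "within_budget D a W"
  shows "\<exists>W'. covering_tour D m W' \<and> D * (length W' - 1) \<le> 2 * cell_dist_sum m + 4 * D * m"
  using assms(2-)
proof (induction "m - a" arbitrary: a W rule: less_induct)
  case less
  have "W \<noteq> []" using less.prems(2) by (simp add: covering_tour_def chain_from_to_def)
  consider "a = m" | "a + D \<le> m" | "a < m" "m < a + D" using less.prems(1) by linarith
  then show ?case
  proof cases
    case 1
    then show ?thesis using less.prems length_le_of_within_budget by blast
  next
    case 2
    then show ?thesis
      using less.hyps[of "a + D"] less.prems \<open>0 < D\<close> \<open>W \<noteq> []\<close>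
        covering_tour_append_trip[of D a W "a + D"] within_budget_append_block[of D a W]
      by auto
  next
    case 3
    then show ?thesis
      using less.prems \<open>W \<noteq> []\<close> covering_tour_append_trip[of D a W m]
        length_append_last_trip_le[of D a W m] by auto
  qed
qed

lemma covering_tour_exists:
  "0 < D \<Longrightarrow> \<exists>W. covering_tour D m W \<and> D * (length W - 1) \<le> 2 * cell_dist_sum m + 4 * D * m"
  using covering_tour_completion[of D 0 m] covering_tour_0 within_budget_0 by blast

lemma comb_tour_exists:
  assumes "0 < D" "0 < H"
  defines "cells \<equiv> {x. fst x < H \<and> snd x < w (fst x)}"
  obtains W where "chain_from_to grid_adj W (0, 0) (0, 0)" "set W = cells" "pile_bounded D (0, 0) W"
    "D * (length W - 1) \<le> 2 * (\<Sum>x\<in>cells - {(0, 0)}. 1 + root_dist x) + 4 * D * card (cells - {(0, 0)})"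
proof -
  define m where "m = (\<Sum>t<H. w t) - 1"
  have "w 0 \<le> (\<Sum>t<H. w t)" using assms(2) by (intro member_le_sum) auto
  then have "{..<(\<Sum>t<H. w t)} = {..m}" using w_pos[of 0] by (auto simp: m_def)
  then have cells: "cells = cell ` {..m}"
    using comb_cells_eq_cell_image by (simp add: cells_def)
  have "{..m} - {0} = {1..m}" by auto
  then have cells': "cells - {(0, 0)} = cell ` {1..m}"
    using cells cell_0 inj_cell by (metis image_empty image_insert image_set_diff)
  have "card (cells - {(0, 0)}) = m"
    using inj_cell by (simp add: cells' card_image inj_on_subset)
  moreover have "(\<Sum>x\<in>cells - {(0, 0)}. 1 + root_dist x) = cell_dist_sum m"
    using inj_cell by (simp add: cells' cell_dist_sum_def sum.reindex inj_on_subset)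
  moreover obtain W where W: "covering_tour D m W"
    and "D * (length W - 1) \<le> 2 * cell_dist_sum m + 4 * D * m"
    using covering_tour_exists[OF assms(1)] by blast
  moreover have "chain_from_to grid_adj W (0, 0) (0, 0)" "set W = cells" "pile_bounded D (0, 0) W"
    using W cells by (simp_all add: covering_tour_def)
  ultimately show ?thesis using that by simp
qed

end

section \<open>Combs in the plane\<close>

text \<open>Tooth \<open>h\<close> of a normalised comb is placed on the row at height \<open>h\<close> above (\<open>\<tau> = 1\<close>)
  or below (\<open>\<tau> = -1\<close>) the root, and runs to the right (\<open>\<sigma> = 1\<close>) or to the left
  (\<open>\<sigma> = -1\<close>) of the handle.\<close>
definition comb_embed :: "int \<Rightarrow> int \<Rightarrow> pixel \<Rightarrow> nat \<times> nat \<Rightarrow> pixel" where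
  "comb_embed \<sigma> \<tau> p v = (fst p + \<sigma> * int (snd v), snd p + \<tau> * int (fst v))"

lemma image_comb_embed:
  assumes "\<sigma> \<in> {1, -1}" "\<tau> \<in> {1, -1}"
  shows "comb_embed \<sigma> \<tau> p ` {v. fst v < H \<and> snd v < w (fst v)} =
    {(x, y). 0 \<le> \<tau> * (y - snd p) \<and> \<tau> * (y - snd p) < int H \<and>
             0 \<le> \<sigma> * (x - fst p) \<and> \<sigma> * (x - fst p) < int (w (nat (\<tau> * (y - snd p))))}"
  (is "?L = ?R")
proof
  show "?L \<subseteq> ?R" using assms by (auto simp: comb_embed_def)
next
  show "?R \<subseteq> ?L"
  proof
    fix q assume "q \<in> ?R"
    moreover obtain x y where "q = (x, y)" by fastforce
    ultimately have xy: "(x, y) \<in> ?R" by simp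
    then have "(x, y) = comb_embed \<sigma> \<tau> p (nat (\<tau> * (y - snd p)), nat (\<sigma> * (x - fst p)))"
      using assms by (auto simp: comb_embed_def)
    then show "q \<in> ?L" using xy \<open>q = (x, y)\<close> by auto
  qed
qed

lemma comb_set_eq_image_comb_embed:
  assumes \<sigma>: "\<sigma> \<in> {1, -1}" and \<tau>: "\<tau> \<in> {1, -1}" and "1 \<le> Hi"
    and teeth: "\<forall>y. 0 \<le> \<tau> * (y - snd p) \<and> \<tau> * (y - snd p) < Hi \<longrightarrow> 0 \<le> \<sigma> * (a y - fst p)"
  shows "{(x, y). 0 \<le> \<tau> * (y - snd p) \<and> \<tau> * (y - snd p) < Hi \<and>
                  0 \<le> \<sigma> * (x - fst p) \<and> \<sigma> * (x - fst p) \<le> \<sigma> * (a y - fst p)} =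
         comb_embed \<sigma> \<tau> p ` {v. fst v < nat Hi \<and>
                                 snd v < nat (\<sigma> * (a (snd p + \<tau> * int (fst v)) - fst p)) + 1}"
proof -
  have "snd p + \<tau> * int (nat (\<tau> * (y - snd p))) = y" if "0 \<le> \<tau> * (y - snd p)" for y
    using that \<tau> by auto
  then show ?thesis
    unfolding image_comb_embed[OF \<sigma> \<tau>, of p "nat Hi"
        "\<lambda>h. nat (\<sigma> * (a (snd p + \<tau> * int h) - fst p)) + 1"]
    using teeth \<open>1 \<le> Hi\<close> by fastforce
qed

lemma comb_with_root_normal_form:
  assumes "comb_with_root C p"
  obtains \<sigma> \<tau> H w where "\<sigma> \<in> {1, -1}" "\<tau> \<in> {1, -1}" "0 < H" "\<And>h. 0 < w h"
    "C = comb_embed \<sigma> \<tau> p ` {v. fst v < H \<and> snd v < w (fst v)}"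
proof -
  obtain y0 Hi c a where Hi: "1 \<le> Hi" and shape:
    "(C = {(x, y). y0 \<le> y \<and> y \<le> y0 + Hi - 1 \<and> a y \<le> x \<and> x \<le> c} \<and>
        (\<forall>y. y0 \<le> y \<and> y \<le> y0 + Hi - 1 \<longrightarrow> a y \<le> c)) \<or>
     (C = {(x, y). y0 \<le> y \<and> y \<le> y0 + Hi - 1 \<and> c \<le> x \<and> x \<le> a y} \<and>
        (\<forall>y. y0 \<le> y \<and> y \<le> y0 + Hi - 1 \<longrightarrow> c \<le> a y))"
    and root: "p = (c, y0) \<or> p = (c, y0 + Hi - 1)"
    using assms unfolding comb_with_root_def by blast
  note conclude = that
  have normal: thesis
    if \<sigma>: "\<sigma> \<in> {1, -1}" and \<tau>: "\<tau> \<in> {1, -1}"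
      and C: "C = {(x, y). 0 \<le> \<tau> * (y - snd p) \<and> \<tau> * (y - snd p) < Hi \<and>
                           0 \<le> \<sigma> * (x - fst p) \<and> \<sigma> * (x - fst p) \<le> \<sigma> * (a y - fst p)}"
      and "\<forall>y. 0 \<le> \<tau> * (y - snd p) \<and> \<tau> * (y - snd p) < Hi \<longrightarrow> 0 \<le> \<sigma> * (a y - fst p)"
    for \<sigma> \<tau>
    using comb_set_eq_image_comb_embed[OF that(1,2) Hi that(4)] Hi
    by (intro conclude[OF \<sigma> \<tau>, of "nat Hi" "\<lambda>h. nat (\<sigma> * (a (snd p + \<tau> * int h) - fst p)) + 1"])
      (simp_all add: C)
  from shape root show thesis
  proof (elim disjE conjE)
    assume "C = {(x, y). y0 \<le> y \<and> y \<le> y0 + Hi - 1 \<and> a y \<le> x \<and> x \<le> c}"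
      and "\<forall>y. y0 \<le> y \<and> y \<le> y0 + Hi - 1 \<longrightarrow> a y \<le> c" and "p = (c, y0)"
    then show thesis by (intro normal[of "-1" 1]) auto
  next
    assume "C = {(x, y). y0 \<le> y \<and> y \<le> y0 + Hi - 1 \<and> a y \<le> x \<and> x \<le> c}"
      and "\<forall>y. y0 \<le> y \<and> y \<le> y0 + Hi - 1 \<longrightarrow> a y \<le> c" and "p = (c, y0 + Hi - 1)"
    then show thesis by (intro normal[of "-1" "-1"]) auto
  next
    assume "C = {(x, y). y0 \<le> y \<and> y \<le> y0 + Hi - 1 \<and> c \<le> x \<and> x \<le> a y}"
      and "\<forall>y. y0 \<le> y \<and> y \<le> y0 + Hi - 1 \<longrightarrow> c \<le> a y" and "p = (c, y0)"
    then show thesis by (intro normal[of 1 1]) auto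
  next
    assume "C = {(x, y). y0 \<le> y \<and> y \<le> y0 + Hi - 1 \<and> c \<le> x \<and> x \<le> a y}"
      and "\<forall>y. y0 \<le> y \<and> y \<le> y0 + Hi - 1 \<longrightarrow> c \<le> a y" and "p = (c, y0 + Hi - 1)"
    then show thesis by (intro normal[of 1 "-1"]) auto
  qed
qed

lemma
  assumes "\<sigma> \<in> {1, -1}" "\<tau> \<in> {1, -1}"
  shows inj_comb_embed: "inj (comb_embed \<sigma> \<tau> p)"
    and comb_embed_root: "comb_embed \<sigma> \<tau> p (0, 0) = p"
    and adj_comb_embed: "grid_adj x y \<Longrightarrow> adj (comb_embed \<sigma> \<tau> p x) (comb_embed \<sigma> \<tau> p y)"
    and comb_embed_dist: "\<bar>fst (comb_embed \<sigma> \<tau> p x) - fst p\<bar> + \<bar>snd (comb_embed \<sigma> \<tau> p x) - snd p\<bar>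
                            = int (root_dist x)"
  using assms by (auto simp: inj_def comb_embed_def adj_def grid_adj_def root_dist_def prod_eq_iff)

lemma comb_with_root_tour_exists:
  fixes d :: "pixel \<Rightarrow> nat"
  assumes "comb_with_root C p" "0 < D"
    and d: "\<forall>q\<in>C. int (d q) = 1 + \<bar>fst q - fst p\<bar> + \<bar>snd q - snd p\<bar>"
  obtains W where "chain_from_to adj W p p" "set W = C" "pile_bounded D p W"
    "D * (length W - 1) \<le> 2 * (\<Sum>q\<in>C - {p}. d q) + 4 * D * card (C - {p})"
proof -
  obtain \<sigma> \<tau> H w where \<sigma>: "\<sigma> \<in> {1, -1}" and \<tau>: "\<tau> \<in> {1, -1}" and "0 < H"
    and w: "\<And>h. 0 < w h" and C: "C = comb_embed \<sigma> \<tau> p ` {v. fst v < H \<and> snd v < w (fst v)}"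
    using comb_with_root_normal_form[OF assms(1)] by blast
  interpret comb_shape w using w by unfold_locales
  define cells where "cells = {v. fst v < H \<and> snd v < w (fst v)}"
  define f where "f = comb_embed \<sigma> \<tau> p"
  obtain V where V: "chain_from_to grid_adj V (0, 0) (0, 0)" "set V = cells" "pile_bounded D (0, 0) V"
    and len: "D * (length V - 1) \<le> 2 * (\<Sum>x\<in>cells - {(0, 0)}. 1 + root_dist x)
                                   + 4 * D * card (cells - {(0, 0)})"
    using comb_tour_exists[OF assms(2) \<open>0 < H\<close>] unfolding cells_def by blast
  have inj: "inj f" and root: "f (0, 0) = p"
    using inj_comb_embed[OF \<sigma> \<tau>] comb_embed_root[OF \<sigma> \<tau>] by (simp_all add: f_def)
  have Cp: "C - {p} = f ` (cells - {(0, 0)})"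
    using C inj root by (simp add: f_def cells_def image_set_diff)
  have d_cell: "d (f x) = 1 + root_dist x" if "x \<in> cells" for x
  proof -
    have "f x \<in> C" using that by (simp add: C f_def cells_def)
    then have "int (d (f x)) = int (1 + root_dist x)"
      using d comb_embed_dist[OF \<sigma> \<tau>, of p x] by (simp add: f_def)
    then show ?thesis by (simp only: of_nat_eq_iff)
  qed
  have "(\<Sum>q\<in>C - {p}. d q) = (\<Sum>x\<in>cells - {(0, 0)}. d (f x))"
    unfolding Cp using inj by (simp add: sum.reindex inj_on_subset)
  also have "\<dots> = (\<Sum>x\<in>cells - {(0, 0)}. 1 + root_dist x)"
    using d_cell by (intro sum.cong) auto
  finally have "(\<Sum>q\<in>C - {p}. d q) = (\<Sum>x\<in>cells - {(0, 0)}. 1 + root_dist x)" .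
  moreover have "card (C - {p}) = card (cells - {(0, 0)})"
    unfolding Cp using inj by (simp add: card_image inj_on_subset)
  moreover have "chain_from_to adj (map f V) p p"
    using chain_from_to_map[OF V(1), of adj f] adj_comb_embed[OF \<sigma> \<tau>] root by (simp add: f_def)
  moreover have "pile_bounded D p (map f V)" using pile_bounded_map[OF inj V(3)] root by simp
  moreover have "set (map f V) = C" using V(2) C by (simp add: f_def cells_def)
  ultimately show thesis using that[of "map f V"] len by simp
qed

theorem lemma4:
  fixes P C :: "pixel set" and p :: pixel and D :: nat and s0 :: "pixel \<Rightarrow> nat"
  assumes "domain P"
    and "D \<ge> 2"
    and "C \<subseteq> P"
    and "comb_with_root C p"
    and "boundary_pixel P p"
    and "\<forall>q\<in>C. int (vdist P q) = 1 + \<bar>fst q - fst p\<bar> + \<bar>snd q - snd p\<bar>"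
    and "\<forall>q\<in>C - {p}. s0 q = 1"
    and "s0 p = 0"
    and "\<forall>q\<in>P. s0 q \<le> D"
  shows "\<exists>n pos tgt snow.
           valid_run P D n pos tgt snow \<and>
           pos 0 = p \<and> snow 0 = s0 \<and>
           (\<forall>i<n. pos (Suc i) \<in> C \<and> (tgt i \<in> C \<or> tgt i \<notin> P)) \<and>
           pos n = p \<and> (\<forall>q\<in>C. snow n q = 0) \<and>
           real n \<le> (let \<Delta> = (\<Sum>q\<in>C - {p}. real (vdist P q)) / real D in
                      if D \<ge> 4 then 4 * real (card (C - {p})) + 4 * \<Delta>
                      else 4 * real (card (C - {p})) + 2 * \<Delta>)"
proof -
  have "0 < D" using assms(2) by simp
  obtain W where W: "chain_from_to adj W p p" "set W = C" "pile_bounded D p W"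
    and len: "D * (length W - 1) \<le> 2 * (\<Sum>q\<in>C - {p}. vdist P q) + 4 * D * card (C - {p})"
    using comb_with_root_tour_exists[OF assms(4) \<open>0 < D\<close> assms(6)] by blast
  obtain r where "adj p r" "r \<notin> P" using assms(5) by (auto simp: boundary_pixel_def)
  interpret snow_walk P D s0 W p r
  proof unfold_locales
    show "\<forall>q\<in>set W. s0 q \<le> 1"
      using W(2) assms(7,8) by (metis DiffI empty_iff insert_iff le_refl zero_le)
  qed (use W assms(3,8,9) \<open>adj p r\<close> \<open>r \<notin> P\<close> in auto)
  define \<Delta> where "\<Delta> = (\<Sum>q\<in>C - {p}. real (vdist P q)) / real D"
  have "real D * real moves \<le> 2 * (\<Sum>q\<in>C - {p}. real (vdist P q)) + 4 * real D * real (card (C - {p}))"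
    using len[folded moves_def, THEN of_nat_mono[where 'a = real]] by simp
  then have "real moves \<le> 4 * real (card (C - {p})) + 2 * \<Delta>"
    using \<open>0 < D\<close> by (simp add: \<Delta>_def field_simps)
  moreover have "0 \<le> \<Delta>" by (simp add: \<Delta>_def sum_nonneg)
  ultimately have "real moves \<le> (let \<Delta> = (\<Sum>q\<in>C - {p}. real (vdist P q)) / real D in
                      if D \<ge> 4 then 4 * real (card (C - {p})) + 4 * \<Delta>
                      else 4 * real (card (C - {p})) + 2 * \<Delta>)"
    unfolding \<Delta>_def[symmetric] Let_def by simp
  then show ?thesis using clearing_run[unfolded W(2)] by blast
qed

end
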